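(* Let $P$ be the set of primes and choose a random subset $Q\subset P$ by including each prime independently with probability $1/2$. Define the completely multiplicative function $\lambda_Q:\mathbb{N}\to\{-1,1\}$ by $\lambda_Q(p)=-1$ for $p\in Q$, $\lambda_Q(p)=1$ for $p\in P\setminus Q$, and $\lambda_Q(p_1^{e_1}\cdots p_k^{e_k})=\prod_i\lambda_Q(p_i)^{e_i}$. Let $A_Q=\{n\in\mathbb{N}:\lambda_Q(n)=-1\}$. Then for almost every $Q$ the set $A_Q$ is normal.
   Context: $\mathbb{N}=\{1,2,\dots\}$. A set $A\subset\mathbb{N}$ is normal if its indicator sequence in $\{0,1\}^{\mathbb{N}}$ contains every finite binary word $w$ with asymptotic frequency $2^{-|w|}$. *)

theory Defs
  imports "HOL-Probability.Probability" "HOL-Computational_Algebra.Primes"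
begin

definition lambdaQ :: "nat set \<Rightarrow> nat \<Rightarrow> int" where
  "lambdaQ Q n = (\<Prod>p\<in>prime_factors n. (if p \<in> Q then -1 else 1) ^ multiplicity p n)"

definition AQ :: "nat set \<Rightarrow> nat set" where
  "AQ Q = {n. n \<ge> 1 \<and> lambdaQ Q n = -1}"

definition normal_set :: "nat set \<Rightarrow> bool" where
  "normal_set A \<longleftrightarrow> (\<forall>w::bool list.
     (\<lambda>N. real (card {i \<in> {1..N}. \<forall>j<length w. ((i + j) \<in> A) = w ! j}) / real N)
       \<longlonglongrightarrow> (1/2) ^ length w)"

text \<open>Random set of primes: independent fair coins indexed by nat; prime p is in Q iff coin p is True.\<close>
definition coin_space :: "(nat \<Rightarrow> bool) measure" where
  "coin_space = PiM UNIV (\<lambda>_. measure_pmf (bernoulli_pmf (1/2)))"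

definition primes_of :: "(nat \<Rightarrow> bool) \<Rightarrow> nat set" where
  "primes_of \<omega> = {p. prime p \<and> \<omega> p}"

end

theory Submission
  imports Defs "HOL-Computational_Algebra.Squarefree" "HOL-Computational_Algebra.Nth_Powers"
    "HOL-Real_Asymp.Real_Asymp"
begin

text \<open>Write \<open>\<lambda>\<close> for \<open>\<lambda>\<^sub>Q\<close> and \<open>P\<^sub>T(i) = \<Prod>\<^sub>j\<^sub>\<in>\<^sub>T (i + j)\<close>. Expanding
  \<open>\<Prod>\<^sub>j\<^sub><\<^sub>k (1 \<plusminus> \<lambda>(i + j))/2\<close> shows that \<open>A\<^sub>Q\<close> is normal as soon as
  \<open>X\<^sub>N = \<Sum>\<^sub>i\<^sub>\<le>\<^sub>N \<lambda>(P\<^sub>T(i)) = o(N)\<close> for every nonempty finite \<open>T\<close>.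
  For independent fair signs, \<open>E \<lambda>(n) = 0\<close> unless \<open>n\<close> is a square, since flipping the
  sign of a prime with odd exponent in \<open>n\<close> negates \<open>\<lambda>(n)\<close>. Hence \<open>E X\<^sub>N\<^sup>2\<close> is at most the
  number of pairs \<open>i, i' \<le> N\<close> with \<open>P\<^sub>T(i) P\<^sub>T(i')\<close> a square. For fixed \<open>i'\<close> such an
  \<open>i\<close> is determined by the square part of \<open>i + j\<close> (\<open>j \<in> T\<close>) and by the primes of its
  squarefree part, which are smaller than \<open>k\<close> or divide \<open>P\<^sub>T(i')\<close>; so there are
  \<open>O(2^\<omega>(P\<^sub>T(i')) \<surd>N) = O(N^(3/4))\<close> of them, and \<open>E X\<^sub>N\<^sup>2 = O(N^(7/4))\<close>.
  Chebyshev's inequality and Borel--Cantelli give \<open>X\<^sub>N = o(N)\<close> almost surely along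
  \<open>N = t\<^sup>8\<close>, and since \<open>\<lambda>\<close> is bounded and consecutive eighth powers have ratio
  tending to 1, along all \<open>N\<close>.\<close>

section \<open>Counting shifted products that are squares\<close>

lemma squarefree_decomposition_eq_nat:
  fixes m n :: nat
  assumes "prime_factors (squarefree_part m) = prime_factors (squarefree_part n)"
    and "square_part m = square_part n"
  shows "m = n"
proof (rule squarefree_decomposition_unique[OF assms(2)])
  have "multiplicity p (squarefree_part m) = multiplicity p (squarefree_part n)"
    if "prime p" for p :: nat
  proof -
    have "multiplicity p (squarefree_part m) \<le> 1" "multiplicity p (squarefree_part n) \<le> 1"
      using that by auto
    moreover have "multiplicity p (squarefree_part m) > 0 \<longleftrightarrow> multiplicity p (squarefree_part n) > 0"
      using assms(1) that by (auto simp: prime_factors_multiplicity set_eq_iff)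
    ultimately show ?thesis by linarith
  qed
  then show "squarefree_part m = squarefree_part n"
    using multiplicity_eq_imp_eq[of "squarefree_part m" "squarefree_part n"] by simp
qed

lemma card_squares_le: "real (card {a::nat. a\<^sup>2 \<le> X}) \<le> sqrt (real X) + 1"
proof -
  have "{a::nat. a\<^sup>2 \<le> X} \<subseteq> {..nat \<lfloor>sqrt (real X)\<rfloor>}"
  proof
    fix a :: nat assume "a \<in> {a. a\<^sup>2 \<le> X}"
    then have "real a ^ 2 \<le> real X" by (simp flip: of_nat_power)
    then have "real a \<le> sqrt (real X)" using real_le_rsqrt by blast
    then show "a \<in> {..nat \<lfloor>sqrt (real X)\<rfloor>}" by (simp add: le_nat_floor)
  qed
  then have "card {a::nat. a\<^sup>2 \<le> X} \<le> nat \<lfloor>sqrt (real X)\<rfloor> + 1"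
    using card_mono[of "{..nat \<lfloor>sqrt (real X)\<rfloor>}"] by fastforce
  then have "real (card {a::nat. a\<^sup>2 \<le> X}) \<le> real (nat \<lfloor>sqrt (real X)\<rfloor> + 1)"
    by (simp only: of_nat_le_iff)
  also have "\<dots> \<le> sqrt (real X) + 1" by simp
  finally show ?thesis .
qed

text \<open>A number is determined by the support of its squarefree part and by its square part.\<close>
lemma card_squarefree_part_supported_le:
  fixes P :: "nat set"
  assumes "finite P"
  shows "real (card {n. n \<le> X \<and> prime_factors (squarefree_part n) \<subseteq> P})
           \<le> 2 ^ card P * (sqrt (real X) + 1)"
proof -
  let ?A = "{n. n \<le> X \<and> prime_factors (squarefree_part n) \<subseteq> P}"
  let ?code = "\<lambda>n::nat. (prime_factors (squarefree_part n), square_part n)"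
  have inj: "inj_on ?code ?A"
    by (rule inj_onI) (simp add: squarefree_decomposition_eq_nat)
  have "square_part n ^ 2 \<le> X" if "n \<le> X" for n :: nat
  proof (cases "n = 0")
    case False
    then have "square_part n ^ 2 \<le> n" by (intro dvd_imp_le) auto
    with that show ?thesis by linarith
  qed simp
  then have img: "?code ` ?A \<subseteq> Pow P \<times> {a. a\<^sup>2 \<le> X}" by auto
  have fin: "finite {a::nat. a\<^sup>2 \<le> X}"
    by (rule finite_subset[of _ "{..X}"]) (auto simp: power2_eq_square intro: order_trans[OF le_square])
  have "card ?A \<le> card (Pow P \<times> {a. a\<^sup>2 \<le> X})"
    by (rule card_inj_on_le[OF inj img]) (simp add: assms fin)
  also have "\<dots> = 2 ^ card P * card {a::nat. a\<^sup>2 \<le> X}"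
    using assms by (simp add: card_cartesian_product card_Pow)
  finally have "real (card ?A) \<le> 2 ^ card P * real (card {a::nat. a\<^sup>2 \<le> X})"
    unfolding of_nat_le_iff[symmetric, where 'a=real] by simp
  also have "\<dots> \<le> 2 ^ card P * (sqrt (real X) + 1)"
    by (intro mult_left_mono card_squares_le) simp
  finally show ?thesis .
qed

definition shift_prod :: "nat set \<Rightarrow> nat \<Rightarrow> nat" where
  "shift_prod S i = (\<Prod>j\<in>S. i + j)"

lemma shift_prod_pos: "i > 0 \<Longrightarrow> shift_prod S i > 0"
  unfolding shift_prod_def by (cases "finite S") auto

lemma shift_prod_le:
  assumes "S \<subseteq> {..<k}" "i \<le> N"
  shows "shift_prod S i \<le> (N + k) ^ k"
proof -
  have "shift_prod S i \<le> (N + k) ^ card S"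
    unfolding shift_prod_def using prod_mono[of S "\<lambda>j. i + j" "\<lambda>_. N + k"] assms by force
  also have "\<dots> \<le> (N + k) ^ k"
  proof (cases "S = {}")
    case False
    then have "k > 0" using assms(1) by auto
    moreover have "card S \<le> k" using card_mono[OF _ assms(1)] by simp
    ultimately show ?thesis by (intro power_increasing) auto
  qed (auto simp: Suc_le_eq)
  finally show ?thesis .
qed

lemma dvd_shifts_eq:
  fixes p :: nat
  assumes "k \<le> p" "j < k" "j' < k" "p dvd i + j" "p dvd i + j'"
  shows "j = j'"
proof (rule ccontr)
  assume "j \<noteq> j'"
  have "p dvd i + j' - (i + j)" "p dvd i + j - (i + j')"
    using assms(4,5) dvd_diff_nat by blast+
  then have "p dvd j' - j" "p dvd j - j'" by simp_all
  with \<open>j \<noteq> j'\<close> have "p \<le> j' - j \<or> p \<le> j - j'"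
    by (metis dvd_imp_le linorder_neqE_nat zero_less_diff)
  with assms(1-3) show False by linarith
qed

lemma multiplicity_shift_prod:
  assumes "S \<subseteq> {..<k}" "j \<in> S" "prime p" "k \<le> p" "i > 0" "p dvd i + j"
  shows "multiplicity p (shift_prod S i) = multiplicity p (i + j)"
proof -
  have fin: "finite S" using assms(1) finite_subset by blast
  have coprime: "\<not> p dvd (\<Prod>j'\<in>S - {j}. i + j')"
  proof
    assume "p dvd (\<Prod>j'\<in>S - {j}. i + j')"
    then obtain j' where j': "j' \<in> S - {j}" "p dvd i + j'"
      using assms(3) fin by (auto simp: prime_dvd_prod_iff)
    then have "j' = j"
      using dvd_shifts_eq[OF assms(4)] assms(1,2,6) by blast
    with j'(1) show False by simp
  qed
  have "shift_prod S i = (i + j) * (\<Prod>j'\<in>S - {j}. i + j')"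
    unfolding shift_prod_def using fin assms(2) by (simp add: prod.remove)
  then have "multiplicity p (shift_prod S i)
      = multiplicity p (i + j) + multiplicity p (\<Prod>j'\<in>S - {j}. i + j')"
    using fin assms(3,5) by (simp add: prime_elem_multiplicity_mult_distrib)
  then show ?thesis by (simp add: not_dvd_imp_multiplicity_0[OF coprime])
qed

lemma prime_factors_squarefree_part_shift_subset:
  assumes S: "S \<subseteq> {..<k}" "j \<in> S" and i: "i > 0" "i' > 0"
    and square: "is_square (shift_prod S i * shift_prod S i')"
  shows "prime_factors (squarefree_part (i + j)) \<subseteq> prime_factors (shift_prod S i') \<union> {..<k}"
proof
  fix p assume p: "p \<in> prime_factors (squarefree_part (i + j))"
  then have "prime p" by auto
  have "multiplicity p (squarefree_part (i + j)) > 0"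
    using p by (simp add: prime_factors_multiplicity)
  then have odd: "odd (multiplicity p (i + j))"
    using \<open>prime p\<close> by (simp add: prime_multiplicity_squarefree_part odd_iff_mod_2_eq_one)
  show "p \<in> prime_factors (shift_prod S i') \<union> {..<k}"
  proof (cases "p < k")
    case False
    have "p dvd i + j"
    proof (rule ccontr)
      assume "\<not> p dvd i + j"
      then have "multiplicity p (i + j) = 0" by (rule not_dvd_imp_multiplicity_0)
      with odd show False by simp
    qed
    then have "multiplicity p (shift_prod S i) = multiplicity p (i + j)"
      using multiplicity_shift_prod[OF S \<open>prime p\<close>] False i by simp
    moreover have "even (multiplicity p (shift_prod S i * shift_prod S i'))"
      using square \<open>prime p\<close> by (auto simp: is_nth_power_conv_multiplicity_nat)
    moreover have "multiplicity p (shift_prod S i * shift_prod S i')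
        = multiplicity p (shift_prod S i) + multiplicity p (shift_prod S i')"
      using shift_prod_pos[OF i(1)] shift_prod_pos[OF i(2)] \<open>prime p\<close>
      by (simp add: prime_elem_multiplicity_mult_distrib)
    ultimately have "multiplicity p (shift_prod S i') > 0" using odd by (intro gr0I) simp
    then show ?thesis
      using \<open>prime p\<close> shift_prod_pos[OF i(2)] by (simp add: prime_factors_multiplicity)
  qed simp
qed

lemma card_square_shift_prod_le_sqrt:
  assumes S: "S \<subseteq> {..<k}" "j \<in> S" and i': "i' > 0"
  shows "real (card {i\<in>{1..N}. is_square (shift_prod S i * shift_prod S i')})
           \<le> 2 ^ (card (prime_factors (shift_prod S i')) + k) * (sqrt (real (N + k)) + 1)"
proof -
  define P where "P = prime_factors (shift_prod S i') \<union> {..<k}"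
  let ?I = "{i\<in>{1..N}. is_square (shift_prod S i * shift_prod S i')}"
  let ?A = "{n. n \<le> N + k \<and> prime_factors (squarefree_part n) \<subseteq> P}"
  have "j < k" using S by auto
  have "card ?I \<le> card ?A"
  proof (rule card_inj_on_le)
    show "inj_on (\<lambda>i. i + j) ?I" by simp
    show "(\<lambda>i. i + j) ` ?I \<subseteq> ?A"
      using prime_factors_squarefree_part_shift_subset[OF S _ i'] \<open>j < k\<close>
      by (force simp: P_def)
    show "finite ?A" by simp
  qed
  then have "real (card ?I) \<le> 2 ^ card P * (sqrt (real (N + k)) + 1)"
    using card_squarefree_part_supported_le[of P "N + k"] by (simp add: P_def)
  also have "\<dots> \<le> 2 ^ (card (prime_factors (shift_prod S i')) + k) * (sqrt (real (N + k)) + 1)"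
  proof -
    have "card P \<le> card (prime_factors (shift_prod S i')) + k"
      unfolding P_def using card_Un_le[of _ "{..<k}"] by simp
    then show ?thesis by (intro mult_right_mono power_increasing) auto
  qed
  finally show ?thesis .
qed

lemma fact_card_le_prod:
  fixes F :: "nat set"
  assumes "finite F" "0 \<notin> F"
  shows "fact (card F) \<le> \<Prod>F"
  using assms
proof (induction "card F" arbitrary: F)
  case (Suc t)
  define m where "m = Max F"
  have "F \<noteq> {}" using Suc.hyps(2) by auto
  then have m: "m \<in> F" unfolding m_def using Suc.prems(1) by simp
  have "F \<subseteq> {1..m}"
  proof
    fix x assume "x \<in> F"
    moreover from this have "x \<le> m" using Suc.prems(1) unfolding m_def by simp
    ultimately show "x \<in> {1..m}" using Suc.prems(2) by (cases x) auto
  qed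
  then have "card F \<le> m" using card_mono[of "{1..m}" F] by simp
  moreover have "card (F - {m}) = t" using Suc.hyps(2) Suc.prems(1) m by simp
  then have "fact t \<le> \<Prod>(F - {m})" using Suc.hyps(1)[of "F - {m}"] Suc.prems by simp
  ultimately have "card F * fact t \<le> m * \<Prod>(F - {m})" by (rule mult_le_mono)
  then show ?case using Suc.prems(1) m by (simp add: prod.remove flip: Suc.hyps(2))
qed simp

lemma prod_prime_factors_le:
  fixes n :: nat
  assumes "n > 0"
  shows "\<Prod>(prime_factors n) \<le> n"
proof -
  have "\<Prod>(prime_factors n) \<le> (\<Prod>p\<in>prime_factors n. p ^ multiplicity p n)"
  proof (rule prod_mono)
    fix p assume "p \<in> prime_factors n"
    then have "prime p" "multiplicity p n \<ge> 1"
      using assms by (auto simp: prime_factors_multiplicity)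
    then show "0 \<le> p \<and> p \<le> p ^ multiplicity p n"
      using prime_ge_1_nat[of p] by (simp add: self_le_power)
  qed
  also have "\<dots> = n" using prod_prime_factors[of n] assms by simp
  finally show ?thesis .
qed

lemma power_le_power_self_mult_fact: "(b::nat) ^ t \<le> b ^ b * fact t"
proof (induction t)
  case 0
  then show ?case by (cases "b = 0") auto
next
  case (Suc t)
  show ?case
  proof (cases "b \<le> Suc t")
    case True
    have "b ^ Suc t \<le> Suc t * (b ^ b * fact t)" using mult_le_mono[OF True Suc.IH] by simp
    also have "\<dots> = b ^ b * fact (Suc t)" by (simp add: algebra_simps)
    finally show ?thesis .
  next
    case False
    then have "b ^ Suc t \<le> b ^ b" by (intro power_increasing) auto
    also have "\<dots> \<le> b ^ b * fact (Suc t)" by (metis mult.right_neutral mult_le_mono2 fact_ge_1)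
    finally show ?thesis .
  qed
qed

text \<open>From \<open>\<omega>(n)! \<le> n\<close> and \<open>b\<^sup>t \<le> b\<^sup>b t!\<close> with \<open>b = 2\<^sup>d\<close>.\<close>
lemma two_power_card_prime_factors_le:
  fixes n d :: nat
  assumes "n > 0" "d > 0"
  shows "2 ^ card (prime_factors n) \<le> real ((2 ^ d) ^ 2 ^ d) powr (1 / d) * real n powr (1 / d)"
proof -
  define t where "t = card (prime_factors n)"
  have "fact t \<le> \<Prod>(prime_factors n)"
    unfolding t_def by (rule fact_card_le_prod) auto
  also have "\<dots> \<le> n" using assms(1) by (rule prod_prime_factors_le)
  finally have "(2 ^ d) ^ 2 ^ d * fact t \<le> (2 ^ d) ^ 2 ^ d * n" by simp
  with power_le_power_self_mult_fact[of "2 ^ d" t]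
  have "(2 ^ d) ^ t \<le> (2 ^ d) ^ 2 ^ d * n" by linarith
  then have "real ((2 ^ d) ^ t) \<le> real ((2 ^ d) ^ 2 ^ d * n)" by (simp only: of_nat_le_iff)
  moreover have "real ((2 ^ d) ^ t) = ((2::real) ^ t) ^ d"
    by (simp add: mult.commute flip: power_mult)
  ultimately have "((2::real) ^ t) ^ d \<le> real ((2 ^ d) ^ 2 ^ d * n)" by simp
  then have "(((2::real) ^ t) ^ d) powr (1 / d) \<le> real ((2 ^ d) ^ 2 ^ d * n) powr (1 / d)"
    by (intro powr_mono2) auto
  then show ?thesis
    using assms(2) by (simp add: t_def powr_mult powr_realpow[symmetric] powr_powr)
qed

lemma two_power_card_prime_factors_shift_prod_le:
  assumes S: "S \<subseteq> {..<k}" and k: "k > 0" and i: "0 < i" "i \<le> N"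
  shows "2 ^ card (prime_factors (shift_prod S i))
    \<le> real ((2 ^ (4 * k)) ^ 2 ^ (4 * k)) powr (1 / real (4 * k)) * real (N + k) powr (1/4)"
proof -
  let ?c = "real ((2 ^ (4 * k)) ^ 2 ^ (4 * k)) powr (1 / real (4 * k))"
  have "2 ^ card (prime_factors (shift_prod S i)) \<le> ?c * real (shift_prod S i) powr (1 / real (4 * k))"
    using two_power_card_prime_factors_le[of "shift_prod S i" "4 * k"] shift_prod_pos[of i S] i k
    by simp
  also have "\<dots> \<le> ?c * real ((N + k) ^ k) powr (1 / real (4 * k))"
  proof -
    have "real (shift_prod S i) \<le> real ((N + k) ^ k)"
      using shift_prod_le[OF S i(2)] by (simp only: of_nat_le_iff)
    then show ?thesis by (intro mult_left_mono powr_mono2) auto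
  qed
  also have "real ((N + k) ^ k) = real (N + k) powr real k"
    using k by (simp add: powr_realpow)
  also have "(real (N + k) powr real k) powr (1 / real (4 * k)) = real (N + k) powr (1/4)"
    using k by (simp add: powr_powr)
  finally show ?thesis .
qed

lemma card_square_shift_prod_le_powr:
  assumes S: "S \<subseteq> {..<k}" "j \<in> S" and i': "1 \<le> i'" "i' \<le> N"
  shows "real (card {i\<in>{1..N}. is_square (shift_prod S i * shift_prod S i')})
    \<le> 2 ^ Suc k * real ((2 ^ (4 * k)) ^ 2 ^ (4 * k)) powr (1 / real (4 * k))
        * real (k + 1) powr (3/4) * real N powr (3/4)"
proof -
  let ?c = "real ((2 ^ (4 * k)) ^ 2 ^ (4 * k)) powr (1 / real (4 * k))"
  define M where "M = real ((k + 1) * N)"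
  have k: "k > 0" using S by auto
  have "N + k \<le> (k + 1) * N" using i' mult_le_mono2[of 1 N k] by simp
  then have "real (N + k) \<le> M" unfolding M_def by (simp only: of_nat_le_iff)
  moreover have "1 \<le> real (N + k)" using i' by simp
  ultimately have M: "1 \<le> M" "real (N + k) \<le> M" by linarith+
  have "2 ^ card (prime_factors (shift_prod S i')) \<le> ?c * real (N + k) powr (1/4)"
    using two_power_card_prime_factors_shift_prod_le[OF S(1) k] i' by simp
  also have "\<dots> \<le> ?c * M powr (1/4)" using M by (intro mult_left_mono powr_mono2) auto
  finally have omega: "2 ^ card (prime_factors (shift_prod S i')) \<le> ?c * M powr (1/4)" .
  have "sqrt (real (N + k)) \<le> M powr (1/2)" using M by (simp add: powr_half_sqrt)
  moreover have "1 \<le> M powr (1/2)" using M by (simp add: ge_one_powr_ge_zero)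
  ultimately have root: "sqrt (real (N + k)) + 1 \<le> 2 * M powr (1/2)" by simp
  have "real (card {i\<in>{1..N}. is_square (shift_prod S i * shift_prod S i')})
      \<le> 2 ^ k * 2 ^ card (prime_factors (shift_prod S i')) * (sqrt (real (N + k)) + 1)"
    using card_square_shift_prod_le_sqrt[OF S, of i' N] i' by (simp add: power_add mult_ac)
  also have "\<dots> \<le> 2 ^ k * (?c * M powr (1/4)) * (2 * M powr (1/2))"
    using omega root by (intro mult_mono mult_left_mono) auto
  also have "\<dots> = 2 ^ Suc k * ?c * (M powr (1/4) * M powr (1/2))" by simp
  also have "M powr (1/4) * M powr (1/2) = M powr (3/4)" by (simp flip: powr_add)
  also have "\<dots> = real (k + 1) powr (3/4) * real N powr (3/4)"
    unfolding M_def of_nat_mult by (rule powr_mult)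
  finally show ?thesis by (simp add: mult_ac)
qed

lemma sum_card_square_shift_prod_le:
  assumes "finite S" "S \<noteq> {}"
  obtains C where "\<And>N. N \<ge> 1 \<Longrightarrow>
    (\<Sum>i'=1..N. real (card {i\<in>{1..N}. is_square (shift_prod S i * shift_prod S i')}))
      \<le> C * real N powr (7/4)"
proof -
  obtain j where j: "j \<in> S" using assms(2) by blast
  define k where "k = Suc (Max S)"
  have S: "S \<subseteq> {..<k}" using assms(1) by (auto simp: k_def less_Suc_eq_le)
  define C where "C = 2 ^ Suc k * real ((2 ^ (4 * k)) ^ 2 ^ (4 * k)) powr (1 / real (4 * k))
    * real (k + 1) powr (3/4)"
  show thesis
  proof (rule that)
    fix N :: nat assume "N \<ge> 1"
    have "(\<Sum>i'=1..N. real (card {i\<in>{1..N}. is_square (shift_prod S i * shift_prod S i')}))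
        \<le> (\<Sum>i'=1..N. C * real N powr (3/4))"
      using card_square_shift_prod_le_powr[OF S j] by (intro sum_mono) (simp add: C_def)
    also have "\<dots> = C * (real N * real N powr (3/4))" by simp
    also have "real N * real N powr (3/4) = real N powr (7/4)"
      using powr_add[of "real N" 1 "3/4"] \<open>N \<ge> 1\<close> by simp
    finally show "(\<Sum>i'=1..N. real (card {i\<in>{1..N}. is_square (shift_prod S i * shift_prod S i')}))
        \<le> C * real N powr (7/4)" .
  qed
qed

section \<open>Averages along sparse sequences\<close>

text \<open>Along \<open>N = (t + 1)\<^sup>8\<close> Chebyshev's inequality bounds the probability of
  \<open>\<bar>X\<^sub>N\<bar> \<ge> \<eta> N\<close> by \<open>C \<eta>\<^sup>-\<^sup>2 (t + 1)\<^sup>-\<^sup>2\<close>, which is summable.\<close>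
lemma (in prob_space) AE_eventually_sparse_small:
  fixes X :: "nat \<Rightarrow> 'a \<Rightarrow> real"
  assumes [measurable]: "\<And>N. X N \<in> borel_measurable M"
    and integrable: "\<And>N. integrable M (\<lambda>x. (X N x)\<^sup>2)"
    and moment: "\<And>N. N \<ge> 1 \<Longrightarrow> expectation (\<lambda>x. (X N x)\<^sup>2) \<le> C * real N powr (7/4)"
    and \<eta>: "\<eta> > 0"
  shows "AE x in M. eventually (\<lambda>t. \<bar>X ((t + 1) ^ 8) x\<bar> < \<eta> * real ((t + 1) ^ 8)) sequentially"
proof -
  define A where "A t = {x\<in>space M. \<eta> * real ((t + 1) ^ 8) \<le> \<bar>X ((t + 1) ^ 8) x\<bar>}" for t
  have [measurable]: "A t \<in> sets M" for t unfolding A_def by measurable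
  have bound: "prob (A t) \<le> C / \<eta>\<^sup>2 * inverse (real (Suc t) ^ 2)" for t
  proof -
    define s where "s = real (Suc t)"
    have s: "s > 0" "real ((t + 1) ^ 8) = s ^ 8" by (simp_all add: s_def)
    have "real ((t + 1) ^ 8) powr (7/4) = (s powr 8) powr (7/4)"
      using s by (simp add: powr_numeral)
    also have "\<dots> = s powr (8 * (7/4))" by (rule powr_powr)
    also have "\<dots> = s ^ 14" using s by (simp add: powr_numeral)
    finally have N: "real ((t + 1) ^ 8) powr (7/4) = s ^ 14" .
    have "prob (A t) \<le> expectation (\<lambda>x. (X ((t + 1) ^ 8) x)\<^sup>2) / (\<eta> * real ((t + 1) ^ 8))\<^sup>2"
      unfolding A_def using \<eta> by (intro second_moment_method integrable) auto
    also have "\<dots> \<le> C * s ^ 14 / (\<eta> * s ^ 8)\<^sup>2"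
      unfolding s(2) using moment[of "(t + 1) ^ 8"] N by (intro divide_right_mono) simp_all
    also have "(\<eta> * s ^ 8)\<^sup>2 = \<eta>\<^sup>2 * s ^ 2 * s ^ 14"
      by (simp add: power_mult_distrib flip: power_mult power_add)
    also have "C * s ^ 14 / (\<eta>\<^sup>2 * s ^ 2 * s ^ 14) = C / \<eta>\<^sup>2 * inverse (s ^ 2)"
      using s \<eta> by (simp add: divide_inverse)
    finally show ?thesis by (simp add: s_def)
  qed
  have "summable (\<lambda>t. inverse (real (Suc t) ^ 2))"
    using inverse_power_summable[of 2, where 'a=real]
      summable_Suc_iff[where f = "\<lambda>t. inverse (real t ^ 2)"] by simp
  then have "summable (\<lambda>t. C / \<eta>\<^sup>2 * inverse (real (Suc t) ^ 2))"
    by (rule summable_mult)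
  then have "summable (\<lambda>t. prob (A t))"
    by (rule summable_comparison_test') (use bound in auto)
  then have "AE x in M. eventually (\<lambda>t. x \<in> space M - A t) sequentially"
    by (intro borel_cantelli_AE1) (auto simp: emeasure_eq_measure)
  then show ?thesis
    by (rule eventually_mono) (auto elim: eventually_mono simp: A_def)
qed

lemma (in prob_space) AE_sparse_averages_tendsto_0:
  fixes X :: "nat \<Rightarrow> 'a \<Rightarrow> real"
  assumes "\<And>N. X N \<in> borel_measurable M"
    and "\<And>N. integrable M (\<lambda>x. (X N x)\<^sup>2)"
    and "\<And>N. N \<ge> 1 \<Longrightarrow> expectation (\<lambda>x. (X N x)\<^sup>2) \<le> C * real N powr (7/4)"
  shows "AE x in M. (\<lambda>t. X ((t + 1) ^ 8) x / real ((t + 1) ^ 8)) \<longlonglongrightarrow> 0"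
proof -
  have "AE x in M. \<forall>m::nat. eventually
      (\<lambda>t. \<bar>X ((t + 1) ^ 8) x\<bar> < inverse (real (Suc m)) * real ((t + 1) ^ 8)) sequentially"
    using AE_eventually_sparse_small[OF assms] by (subst AE_all_countable) simp
  then show ?thesis
  proof (rule eventually_mono)
    fix x
    assume small: "\<forall>m::nat. eventually
      (\<lambda>t. \<bar>X ((t + 1) ^ 8) x\<bar> < inverse (real (Suc m)) * real ((t + 1) ^ 8)) sequentially"
    show "(\<lambda>t. X ((t + 1) ^ 8) x / real ((t + 1) ^ 8)) \<longlonglongrightarrow> 0"
    proof (rule tendstoI)
      fix r :: real assume "r > 0"
      then obtain m where m: "inverse (real (Suc m)) < r" using reals_Archimedean by blast
      show "eventually (\<lambda>t. dist (X ((t + 1) ^ 8) x / real ((t + 1) ^ 8)) 0 < r) sequentially"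
        using small[rule_format, of m]
      proof (rule eventually_mono)
        fix t
        assume "\<bar>X ((t + 1) ^ 8) x\<bar> < inverse (real (Suc m)) * real ((t + 1) ^ 8)"
        then have "\<bar>X ((t + 1) ^ 8) x\<bar> / real ((t + 1) ^ 8) < inverse (real (Suc m))"
          by (simp add: divide_less_eq)
        with m show "dist (X ((t + 1) ^ 8) x / real ((t + 1) ^ 8)) 0 < r"
          by (simp add: abs_divide)
      qed
    qed
  qed
qed

lemma obtain_bracketing_index:
  fixes n :: "nat \<Rightarrow> nat"
  assumes "strict_mono n" "n T \<le> N"
  obtains t where "T \<le> t" "n t \<le> N" "N < n (Suc t)"
proof -
  let ?I = "{t. n t \<le> N}"
  have "?I \<subseteq> {..N}" using seq_suble[OF assms(1)] by (auto intro: le_trans)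
  then have fin: "finite ?I" by (rule finite_subset) simp
  have T: "T \<in> ?I" using assms(2) by simp
  show thesis
  proof (rule that)
    show "T \<le> Max ?I" using fin T by (rule Max_ge)
    show "n (Max ?I) \<le> N" using Max_in[OF fin] T by blast
    show "N < n (Suc (Max ?I))"
    proof (rule ccontr)
      assume "\<not> N < n (Suc (Max ?I))"
      then have "Suc (Max ?I) \<le> Max ?I" using fin by (intro Max_ge) auto
      then show False by simp
    qed
  qed
qed

lemma abs_sum_extend_le:
  fixes f :: "nat \<Rightarrow> real"
  assumes "\<And>i. \<bar>f i\<bar> \<le> 1"
  shows "\<bar>(\<Sum>i=1..M + d. f i) - (\<Sum>i=1..M. f i)\<bar> \<le> real d"
proof -
  have "(\<Sum>i=1..M + d. f i) - (\<Sum>i=1..M. f i) = (\<Sum>i=M+1..M+d. f i)"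
    by (subst sum.ub_add_nat) simp_all
  also have "\<bar>\<dots>\<bar> \<le> (\<Sum>i=M+1..M+d. \<bar>f i\<bar>)" by (rule sum_abs)
  also have "\<dots> \<le> (\<Sum>i=M+1..M+d. 1)" by (intro sum_mono assms)
  finally show ?thesis by simp
qed

lemma averages_tendsto_0_from_subsequence:
  fixes f :: "nat \<Rightarrow> real" and n :: "nat \<Rightarrow> nat"
  assumes bounded: "\<And>i. \<bar>f i\<bar> \<le> 1"
    and n: "strict_mono n" "n 0 > 0" "(\<lambda>t. real (n (Suc t)) / real (n t)) \<longlonglongrightarrow> 1"
    and sparse: "(\<lambda>t. (\<Sum>i=1..n t. f i) / real (n t)) \<longlonglongrightarrow> 0"
  shows "(\<lambda>N. (\<Sum>i=1..N. f i) / real N) \<longlonglongrightarrow> 0"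
proof (rule tendstoI)
  fix r :: real assume r: "r > 0"
  define X where "X N = (\<Sum>i=1..N. f i)" for N
  have pos: "real (n t) > 0" for t
    using n(2) strict_mono_less_eq[OF n(1), of 0 t] by simp
  have "eventually (\<lambda>t. \<bar>X (n t) / real (n t)\<bar> < r/2) sequentially"
    unfolding X_def by (rule order_tendstoD(2)[OF tendsto_rabs_zero[OF sparse]]) (use r in simp)
  then have "eventually (\<lambda>t. \<bar>X (n t)\<bar> < r/2 * real (n t)) sequentially"
    by (rule eventually_mono) (use pos in \<open>simp add: abs_divide divide_less_eq\<close>)
  moreover have "eventually (\<lambda>t. real (n (Suc t)) / real (n t) < 1 + r/2) sequentially"
    by (rule order_tendstoD(2)[OF n(3)]) (use r in simp)
  then have "eventually (\<lambda>t. real (n (Suc t)) - real (n t) < r/2 * real (n t)) sequentially"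
    by (rule eventually_mono) (use pos in \<open>simp add: divide_less_eq algebra_simps\<close>)
  ultimately have "eventually (\<lambda>t. \<bar>X (n t)\<bar> < r/2 * real (n t)
      \<and> real (n (Suc t)) - real (n t) < r/2 * real (n t)) sequentially"
    by (rule eventually_conj)
  then obtain T where T: "\<And>t. t \<ge> T \<Longrightarrow>
      \<bar>X (n t)\<bar> < r/2 * real (n t) \<and> real (n (Suc t)) - real (n t) < r/2 * real (n t)"
    unfolding eventually_sequentially by blast
  show "eventually (\<lambda>N. dist ((\<Sum>i=1..N. f i) / real N) 0 < r) sequentially"
    unfolding eventually_sequentially
  proof (intro exI allI impI)
    fix N assume "N \<ge> n T"
    then obtain t where t: "T \<le> t" "n t \<le> N" "N < n (Suc t)"
      using obtain_bracketing_index[OF n(1)] by blast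
    then obtain d where d: "N = n t + d" using le_Suc_ex by blast
    have "\<bar>X N\<bar> \<le> \<bar>X (n t)\<bar> + real d"
      using abs_sum_extend_le[of f "n t" d, OF bounded] unfolding d X_def by linarith
    also have "\<dots> < r/2 * real (n t) + r/2 * real (n t)"
      using T[OF t(1)] t(3) d by simp
    also have "\<dots> \<le> r * real N" using t(2) r by simp
    finally show "dist ((\<Sum>i=1..N. f i) / real N) 0 < r"
      using pos[of t] t(2) by (simp add: X_def abs_divide divide_less_eq)
  qed
qed

lemma strict_mono_eighth_powers: "strict_mono (\<lambda>t::nat. (t + 1) ^ 8)"
  by (rule strict_monoI) (simp add: power_strict_mono)

lemma eighth_powers_ratio_tendsto_1:
  "(\<lambda>t. real ((Suc t + 1) ^ 8) / real ((t + 1) ^ 8)) \<longlonglongrightarrow> 1"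
proof -
  have "((\<lambda>t. (real t + 2) ^ 8 / (real t + 1) ^ 8) \<longlongrightarrow> 1) at_top" by real_asymp
  then show ?thesis by (simp add: add.commute numeral_2_eq_2)
qed

section \<open>A criterion for normality\<close>

lemma indicator_eq_sign_average:
  fixes x :: real
  assumes "x = 1 \<or> x = -1"
  shows "(if (x = -1) = b then 1 else 0) = (1 + (if b then -1 else 1) * x) / 2"
  using assms by (cases b) auto

text \<open>Expanding the product \<open>\<Prod>\<^sub>j\<^sub><\<^sub>k (1 \<plusminus> f(i + j))/2\<close>, which is the indicator of an
  occurrence of a word of length \<open>k\<close> at position \<open>i\<close>.\<close>
lemma word_frequency_eq_sum_shift_averages:
  fixes f :: "nat \<Rightarrow> real" and w :: "bool list"
  assumes pm: "\<And>n. f n = 1 \<or> f n = -1"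
  shows "real (card {i\<in>{1..N}. \<forall>j<length w. ((i + j) \<in> {n. n \<ge> 1 \<and> f n = -1}) = w ! j}) / real N
    = (1/2) ^ length w * (\<Sum>T\<in>Pow {..<length w}. (\<Prod>j\<in>T. if w ! j then -1 else 1)
        * ((\<Sum>i=1..N. \<Prod>j\<in>T. f (i + j)) / real N))"
proof -
  define k where "k = length w"
  define s where "s j = (if w ! j then -1 else (1::real))" for j
  define S where "S T = (\<Sum>i=1..N. \<Prod>j\<in>T. f (i + j))" for T
  let ?match = "\<lambda>i. \<forall>j<k. ((i + j) \<in> {n. n \<ge> 1 \<and> f n = -1}) = w ! j"
  have match: "(if ?match i then 1 else 0)
      = (1/2) ^ k * (\<Sum>T\<in>Pow {..<k}. (\<Prod>j\<in>T. s j) * (\<Prod>j\<in>T. f (i + j)))"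
    if "i \<ge> 1" for i
  proof -
    have "(if ?match i then 1 else 0) = (\<Prod>j<k. if (f (i + j) = -1) = w ! j then 1 else (0::real))"
      using that by (auto simp: prod_zero_iff)
    also have "\<dots> = (\<Prod>j<k. (1/2) * (s j * f (i + j) + 1))"
      using pm by (intro prod.cong refl) (simp add: indicator_eq_sign_average s_def)
    also have "\<dots> = (1/2) ^ k * (\<Prod>j<k. s j * f (i + j) + 1)"
      unfolding prod.distrib by simp
    also have "(\<Prod>j<k. s j * f (i + j) + 1) = (\<Sum>T\<in>Pow {..<k}. \<Prod>j\<in>T. s j * f (i + j))"
      by (simp add: prod_add)
    finally show ?thesis by (simp add: prod.distrib)
  qed
  have count: "real (card {i\<in>A. P i}) = (\<Sum>i\<in>A. if P i then 1 else 0)"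
    if "finite A" for A and P :: "nat \<Rightarrow> bool"
    using that by (simp add: sum.If_cases Int_def)
  have "real (card {i\<in>{1..N}. ?match i}) = (\<Sum>i=1..N. if ?match i then 1 else 0)"
    by (rule count) simp
  also have "\<dots> = (\<Sum>i=1..N. (1/2) ^ k * (\<Sum>T\<in>Pow {..<k}. (\<Prod>j\<in>T. s j) * (\<Prod>j\<in>T. f (i + j))))"
    by (rule sum.cong[OF refl], rule match) simp
  also have "\<dots> = (1/2) ^ k * (\<Sum>T\<in>Pow {..<k}. (\<Prod>j\<in>T. s j) * S T)"
    unfolding S_def by (simp add: sum_distrib_left) (rule sum.swap)
  finally have "real (card {i\<in>{1..N}. ?match i}) / real N
      = (1/2) ^ k * (\<Sum>T\<in>Pow {..<k}. (\<Prod>j\<in>T. s j) * (S T / real N))"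
    by (simp only: times_divide_eq_right sum_divide_distrib[symmetric])
  then show ?thesis by (simp only: k_def s_def S_def)
qed

lemma normal_set_if_shift_correlations_vanish:
  fixes f :: "nat \<Rightarrow> real"
  assumes pm: "\<And>n. f n = 1 \<or> f n = -1"
    and corr: "\<And>T. finite T \<Longrightarrow> T \<noteq> {} \<Longrightarrow>
      (\<lambda>N. (\<Sum>i=1..N. \<Prod>j\<in>T. f (i + j)) / real N) \<longlonglongrightarrow> 0"
  shows "normal_set {n. n \<ge> 1 \<and> f n = -1}"
  unfolding normal_set_def word_frequency_eq_sum_shift_averages[OF pm]
proof
  fix w :: "bool list"
  let ?s = "\<lambda>T. \<Prod>j\<in>T. if w ! j then -1 else 1 :: real"
  have "(\<lambda>N. (\<Sum>i=1..N. \<Prod>j\<in>T. f (i + j)) / real N) \<longlonglongrightarrow> (if T = {} then 1 else 0)"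
    if "T \<in> Pow {..<length w}" for T
  proof (cases "T = {}")
    case True
    have "eventually (\<lambda>N. (\<Sum>i=1..N. \<Prod>j\<in>T. f (i + j)) / real N = 1) sequentially"
      using eventually_gt_at_top[of 0] by eventually_elim (simp add: True)
    with True show ?thesis by (simp add: tendsto_eventually)
  next
    case False
    moreover have "finite T" using that finite_subset by auto
    ultimately show ?thesis using corr by simp
  qed
  then have "(\<lambda>N. (1/2) ^ length w * (\<Sum>T\<in>Pow {..<length w}.
      ?s T * ((\<Sum>i=1..N. \<Prod>j\<in>T. f (i + j)) / real N)))
    \<longlonglongrightarrow> (1/2) ^ length w * (\<Sum>T\<in>Pow {..<length w}. ?s T * (if T = {} then 1 else 0))"
    by (intro tendsto_intros)
  moreover have "(\<Sum>T\<in>Pow {..<length w}. ?s T * (if T = {} then 1 else 0)) = 1"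
    by (simp add: if_distrib sum.delta cong: if_cong)
  ultimately show "(\<lambda>N. (1/2) ^ length w * (\<Sum>T\<in>Pow {..<length w}.
      ?s T * ((\<Sum>i=1..N. \<Prod>j\<in>T. f (i + j)) / real N))) \<longlonglongrightarrow> (1/2) ^ length w"
    by simp
qed

section \<open>The random completely multiplicative function\<close>

lemma lambdaQ_eq_prod_superset:
  assumes "finite F" "prime_factors n \<subseteq> F" "\<forall>p\<in>F. prime p"
  shows "lambdaQ Q n = (\<Prod>p\<in>F. (if p \<in> Q then -1 else 1) ^ multiplicity p n)"
  unfolding lambdaQ_def
proof (rule prod.mono_neutral_left[OF assms(1,2)])
  show "\<forall>p\<in>F - prime_factors n. (if p \<in> Q then - 1 else 1) ^ multiplicity p n = (1::int)"
    using assms(3) by (auto simp: prime_factors_multiplicity)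
qed

lemma lambdaQ_mult:
  assumes "m > 0" "n > 0"
  shows "lambdaQ Q (m * n) = lambdaQ Q m * lambdaQ Q n"
proof -
  let ?F = "prime_factors (m * n)"
  let ?sign = "\<lambda>p. if p \<in> Q then - 1 else (1::int)"
  have F: "prime_factors m \<subseteq> ?F" "prime_factors n \<subseteq> ?F"
    using assms by (auto simp: prime_factors_product)
  have "lambdaQ Q (m * n) = (\<Prod>p\<in>?F. ?sign p ^ multiplicity p m * ?sign p ^ multiplicity p n)"
    unfolding lambdaQ_def
  proof (intro prod.cong refl)
    fix p assume "p \<in> ?F"
    then have "prime p" by auto
    then show "?sign p ^ multiplicity p (m * n) = ?sign p ^ multiplicity p m * ?sign p ^ multiplicity p n"
      using assms by (simp add: prime_elem_multiplicity_mult_distrib power_add)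
  qed
  also have "\<dots> = lambdaQ Q m * lambdaQ Q n"
  proof -
    have "lambdaQ Q m = (\<Prod>p\<in>?F. ?sign p ^ multiplicity p m)"
      by (rule lambdaQ_eq_prod_superset[OF _ F(1)]) auto
    moreover have "lambdaQ Q n = (\<Prod>p\<in>?F. ?sign p ^ multiplicity p n)"
      by (rule lambdaQ_eq_prod_superset[OF _ F(2)]) auto
    ultimately show ?thesis by (simp add: prod.distrib)
  qed
  finally show ?thesis .
qed

lemma lambdaQ_prod:
  assumes "\<And>j. j \<in> S \<Longrightarrow> f j > 0"
  shows "lambdaQ Q (\<Prod>j\<in>S. f j) = (\<Prod>j\<in>S. lambdaQ Q (f j))"
  using assms
proof (induction S rule: infinite_finite_induct)
  case (insert j S)
  then show ?case by (simp add: lambdaQ_mult)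
qed (simp_all add: lambdaQ_def)

lemma lambdaQ_cases: "lambdaQ Q n = 1 \<or> lambdaQ Q n = -1"
proof -
  have "\<bar>lambdaQ Q n\<bar> = 1"
    unfolding lambdaQ_def abs_prod by (intro prod.neutral) (simp add: power_abs)
  then show ?thesis by auto
qed

abbreviation fair_coin :: "bool measure" where
  "fair_coin \<equiv> measure_pmf (bernoulli_pmf (1/2))"

interpretation coins: product_prob_space "\<lambda>_::nat. fair_coin" UNIV
  by unfold_locales (auto intro: prob_space_measure_pmf)

lemma coin_space_eq: "coin_space = PiM UNIV (\<lambda>_::nat. fair_coin)"
  by (simp add: coin_space_def)

interpretation coin_space: prob_space coin_space
  unfolding coin_space_eq by (rule coins.P.prob_space_axioms)

lemma space_coin_space [simp]: "space coin_space = UNIV"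
  by (simp add: coin_space_eq space_PiM)

lemma borel_measurable_coin_component [measurable]: "(\<lambda>\<omega>. g (\<omega> p) :: real) \<in> borel_measurable coin_space"
proof -
  have "(\<lambda>\<omega>. \<omega> p) \<in> coin_space \<rightarrow>\<^sub>M fair_coin"
    unfolding coin_space_eq by (rule measurable_component_singleton) simp
  then show ?thesis by (rule measurable_compose) simp
qed

lemma emeasure_fair_coin_Not: "emeasure fair_coin {b. (\<not> b) \<in> X} = emeasure fair_coin X"
proof -
  have Not_image: "{b. (\<not> b) \<in> X} = Not ` X"
  proof (rule set_eqI)
    fix b show "b \<in> {b. (\<not> b) \<in> X} \<longleftrightarrow> b \<in> Not ` X"
      by (cases b) (auto simp: image_iff)
  qed
  have pmf: "pmf (bernoulli_pmf (1/2)) b = 1/2" for b by (cases b) simp_all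
  have "card (Not ` X) = card X" by (rule card_image) (simp add: inj_on_def)
  then have "(\<Sum>b\<in>Not ` X. pmf (bernoulli_pmf (1/2)) b) = (\<Sum>b\<in>X. pmf (bernoulli_pmf (1/2)) b)"
    by (simp add: pmf)
  then show ?thesis
    unfolding Not_image by (simp add: emeasure_measure_pmf_finite)
qed

definition flip_coin :: "nat \<Rightarrow> (nat \<Rightarrow> bool) \<Rightarrow> nat \<Rightarrow> bool" where
  "flip_coin q c = c(q := \<not> c q)"

lemma measurable_flip_coin: "flip_coin q \<in> coin_space \<rightarrow>\<^sub>M coin_space"
proof -
  have "flip_coin q = (\<lambda>\<omega> i. (if i = q then Not else id) (\<omega> i))"
    by (auto simp: flip_coin_def fun_eq_iff)
  also have "\<dots> \<in> coin_space \<rightarrow>\<^sub>M coin_space"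
    unfolding coin_space_eq
  proof (rule measurable_PiM_single')
    fix i :: nat
    have "(\<lambda>\<omega>. \<omega> i) \<in> PiM UNIV (\<lambda>_::nat. fair_coin) \<rightarrow>\<^sub>M fair_coin"
      by (rule measurable_component_singleton) simp
    then show "(\<lambda>\<omega>. (if i = q then Not else id) (\<omega> i)) \<in> PiM UNIV (\<lambda>_::nat. fair_coin) \<rightarrow>\<^sub>M fair_coin"
      by (rule measurable_compose) simp
  qed (simp add: space_PiM)
  finally show ?thesis .
qed

lemma distr_flip_coin: "distr coin_space coin_space (flip_coin q) = coin_space"
  unfolding coin_space_eq
proof (rule coins.PiM_eq)
  fix J :: "nat set" and F
  assume J: "finite J" and F: "\<And>j. j \<in> J \<Longrightarrow> F j \<in> sets fair_coin"
  define G where "G j = (if j = q then {b. (\<not> b) \<in> F q} else F j)" for j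
  let ?emb = "prod_emb UNIV (\<lambda>_::nat. fair_coin) J (Pi\<^sub>E J F)"
  have "flip_coin q -` ?emb = {\<omega>. \<forall>j\<in>J. \<omega> j \<in> G j}"
    by (auto simp: prod_emb_def space_PiM PiE_iff G_def flip_coin_def split: if_splits)
  moreover have "?emb \<in> sets coin_space"
    unfolding coin_space_eq by (rule sets_PiM_I) (use J F in auto)
  ultimately have "emeasure (distr coin_space coin_space (flip_coin q)) ?emb
      = emeasure coin_space {\<omega>. \<forall>j\<in>J. \<omega> j \<in> G j}"
    by (simp add: emeasure_distr[OF measurable_flip_coin])
  also have "\<dots> = (\<Prod>j\<in>J. emeasure fair_coin (G j))"
    using coins.emeasure_PiM_Collect[of J G] J by (simp add: coin_space_eq space_PiM)
  also have "\<dots> = (\<Prod>j\<in>J. emeasure fair_coin (F j))"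
    by (intro prod.cong) (simp_all add: G_def emeasure_fair_coin_Not)
  finally show "emeasure (distr (PiM UNIV (\<lambda>_. fair_coin)) (PiM UNIV (\<lambda>_. fair_coin)) (flip_coin q)) ?emb
      = (\<Prod>j\<in>J. emeasure fair_coin (F j))"
    by (simp add: coin_space_eq)
qed (simp add: coin_space_eq)

definition random_lambda :: "(nat \<Rightarrow> bool) \<Rightarrow> nat \<Rightarrow> real" where
  "random_lambda c n = of_int (lambdaQ (primes_of c) n)"

lemma random_lambda_eq_prod:
  "random_lambda c n = (\<Prod>p\<in>prime_factors n. (if c p then -1 else 1) ^ multiplicity p n)"
  unfolding random_lambda_def lambdaQ_def primes_of_def of_int_prod
  by (intro prod.cong refl) auto

lemma measurable_random_lambda [measurable]:
  "(\<lambda>c. random_lambda c n) \<in> borel_measurable coin_space"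
  unfolding random_lambda_eq_prod by (intro borel_measurable_prod borel_measurable_coin_component)

lemma random_lambda_cases: "random_lambda c n = 1 \<or> random_lambda c n = -1"
  using lambdaQ_cases[of "primes_of c" n] by (auto simp: random_lambda_def)

lemma abs_random_lambda: "\<bar>random_lambda c n\<bar> \<le> 1"
  using random_lambda_cases[of c n] by auto

lemma random_lambda_mult:
  "m > 0 \<Longrightarrow> n > 0 \<Longrightarrow> random_lambda c (m * n) = random_lambda c m * random_lambda c n"
  by (simp add: random_lambda_def lambdaQ_mult)

lemma random_lambda_flip_coin:
  assumes "prime q" "odd (multiplicity q n)"
  shows "random_lambda (flip_coin q c) n = - random_lambda c n"
proof -
  let ?factor = "\<lambda>c p. (if c p then -1 else 1::real) ^ multiplicity p n"
  have "n \<noteq> 0" "multiplicity q n \<noteq> 0" using assms(2) by (metis dvd_0_right multiplicity_zero)+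
  then have q: "q \<in> prime_factors n" using assms(1) by (simp add: prime_factors_multiplicity)
  have "?factor (flip_coin q c) q = - ?factor c q"
    using assms(2) by (simp add: flip_coin_def)
  moreover have "?factor (flip_coin q c) p = ?factor c p" if "p \<noteq> q" for p
    using that by (simp add: flip_coin_def)
  ultimately show ?thesis
    unfolding random_lambda_eq_prod using q by (simp add: prod.remove)
qed

lemma expectation_random_lambda:
  assumes "\<not> is_square n"
  shows "coin_space.expectation (\<lambda>c. random_lambda c n) = 0"
proof -
  obtain q where q: "prime q" "odd (multiplicity q n)"
    using assms by (auto simp: is_nth_power_conv_multiplicity_nat)
  have "coin_space.expectation (\<lambda>c. random_lambda c n)
      = integral\<^sup>L (distr coin_space coin_space (flip_coin q)) (\<lambda>c. random_lambda c n)"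
    by (simp add: distr_flip_coin)
  also have "\<dots> = coin_space.expectation (\<lambda>c. random_lambda (flip_coin q c) n)"
    by (rule integral_distr[OF measurable_flip_coin]) simp
  also have "\<dots> = - coin_space.expectation (\<lambda>c. random_lambda c n)"
    by (simp add: random_lambda_flip_coin[OF q])
  finally show ?thesis by simp
qed

lemma integrable_random_lambda: "integrable coin_space (\<lambda>c. random_lambda c n)"
  by (rule coin_space.integrable_const_bound[where B = 1]) (simp_all add: abs_random_lambda)

lemma expectation_random_lambda_le:
  "coin_space.expectation (\<lambda>c. random_lambda c n) \<le> (if is_square n then 1 else 0)"
proof (cases "is_square n")
  case True
  have "coin_space.expectation (\<lambda>c. random_lambda c n) \<le> coin_space.expectation (\<lambda>c. 1)"
    using abs_random_lambda by (intro integral_mono integrable_random_lambda) (auto simp: abs_le_iff)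
  with True show ?thesis using coin_space.prob_space by simp
qed (simp add: expectation_random_lambda)

lemma AQ_primes_of_eq:
  "AQ (primes_of c) = {n. n \<ge> 1 \<and> random_lambda c n = -1}"
  using lambdaQ_cases[of "primes_of c"] by (auto simp: AQ_def random_lambda_def)

lemma random_lambda_shift_prod:
  "i > 0 \<Longrightarrow> random_lambda c (shift_prod S i) = (\<Prod>j\<in>S. random_lambda c (i + j))"
  unfolding random_lambda_def shift_prod_def by (simp add: lambdaQ_prod)

section \<open>Almost sure vanishing of shifted correlations\<close>

definition lambda_shift_sum :: "nat set \<Rightarrow> (nat \<Rightarrow> bool) \<Rightarrow> nat \<Rightarrow> real" where
  "lambda_shift_sum S c N = (\<Sum>i=1..N. random_lambda c (shift_prod S i))"

lemma measurable_lambda_shift_sum [measurable]: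
  "(\<lambda>c. lambda_shift_sum S c N) \<in> borel_measurable coin_space"
  unfolding lambda_shift_sum_def by (intro borel_measurable_sum measurable_random_lambda)

lemma integrable_lambda_shift_sum_sq:
  "integrable coin_space (\<lambda>c. (lambda_shift_sum S c N)\<^sup>2)"
proof (rule coin_space.integrable_const_bound[where B = "real N ^ 2"])
  have bound: "\<bar>lambda_shift_sum S c N\<bar> \<le> real N" for c
  proof -
    have "\<bar>lambda_shift_sum S c N\<bar> \<le> (\<Sum>i=1..N. \<bar>random_lambda c (shift_prod S i)\<bar>)"
      unfolding lambda_shift_sum_def by (rule sum_abs)
    also have "\<dots> \<le> (\<Sum>i=1..N. 1)" by (intro sum_mono abs_random_lambda)
    finally show ?thesis by simp
  qed
  have "\<bar>lambda_shift_sum S c N\<bar>\<^sup>2 \<le> real N ^ 2" for c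
    by (rule power_mono[OF bound]) simp
  then show "AE c in coin_space. norm ((lambda_shift_sum S c N)\<^sup>2) \<le> real N ^ 2"
    by simp
qed simp

lemma expectation_lambda_shift_sum_sq_le:
  "coin_space.expectation (\<lambda>c. (lambda_shift_sum S c N)\<^sup>2)
     \<le> (\<Sum>i'=1..N. real (card {i\<in>{1..N}. is_square (shift_prod S i * shift_prod S i')}))"
proof -
  let ?square = "\<lambda>i i'. is_square (shift_prod S i * shift_prod S i')"
  have "(lambda_shift_sum S c N)\<^sup>2
      = (\<Sum>i=1..N. \<Sum>i'=1..N. random_lambda c (shift_prod S i * shift_prod S i'))" for c
    unfolding lambda_shift_sum_def power2_eq_square sum_product
    by (intro sum.cong refl) (simp add: random_lambda_mult shift_prod_pos)
  then have "coin_space.expectation (\<lambda>c. (lambda_shift_sum S c N)\<^sup>2)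
      = (\<Sum>i=1..N. \<Sum>i'=1..N. coin_space.expectation
          (\<lambda>c. random_lambda c (shift_prod S i * shift_prod S i')))"
    by (simp add: integrable_random_lambda)
  also have "\<dots> \<le> (\<Sum>i=1..N. \<Sum>i'=1..N. if ?square i i' then 1 else 0)"
    by (intro sum_mono expectation_random_lambda_le)
  also have "\<dots> = (\<Sum>i'=1..N. \<Sum>i=1..N. if ?square i i' then 1 else 0)"
    by (rule sum.swap)
  also have "\<dots> = (\<Sum>i'=1..N. real (card {i\<in>{1..N}. ?square i i'}))"
    by (simp add: sum.If_cases Int_def)
  finally show ?thesis .
qed

lemma AE_lambda_shift_average_tendsto_0:
  assumes "finite S" "S \<noteq> {}"
  shows "AE c in coin_space. (\<lambda>N. lambda_shift_sum S c N / real N) \<longlonglongrightarrow> 0"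
proof -
  obtain C where C: "\<And>N. N \<ge> 1 \<Longrightarrow>
      (\<Sum>i'=1..N. real (card {i\<in>{1..N}. is_square (shift_prod S i * shift_prod S i')}))
        \<le> C * real N powr (7/4)"
    using sum_card_square_shift_prod_le[OF assms] by blast
  have "AE c in coin_space.
      (\<lambda>t. lambda_shift_sum S c ((t + 1) ^ 8) / real ((t + 1) ^ 8)) \<longlonglongrightarrow> 0"
    using order_trans[OF expectation_lambda_shift_sum_sq_le C]
    by (intro coin_space.AE_sparse_averages_tendsto_0 integrable_lambda_shift_sum_sq) auto
  then show ?thesis
  proof (rule eventually_mono)
    fix c
    assume "(\<lambda>t. lambda_shift_sum S c ((t + 1) ^ 8) / real ((t + 1) ^ 8)) \<longlonglongrightarrow> 0"
    then show "(\<lambda>N. lambda_shift_sum S c N / real N) \<longlonglongrightarrow> 0"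
      unfolding lambda_shift_sum_def
      using strict_mono_eighth_powers eighth_powers_ratio_tendsto_1 abs_random_lambda
      by (intro averages_tendsto_0_from_subsequence[where n = "\<lambda>t. (t + 1) ^ 8"]) simp_all
  qed
qed

theorem mainTheorem12:
  shows "AE \<omega> in coin_space. normal_set (AQ (primes_of \<omega>))"
proof -
  have "countable {S :: nat set. finite S \<and> S \<noteq> {}}"
    by (rule countable_subset[OF _ countable_Collect_finite]) auto
  then have "AE c in coin_space. \<forall>S\<in>{S. finite S \<and> S \<noteq> {}}.
      (\<lambda>N. lambda_shift_sum S c N / real N) \<longlonglongrightarrow> 0"
    by (intro AE_ball_countable') (auto intro: AE_lambda_shift_average_tendsto_0)
  then show ?thesis
  proof (rule eventually_mono)
    fix c assume corr: "\<forall>S\<in>{S. finite S \<and> S \<noteq> {}}.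
      (\<lambda>N. lambda_shift_sum S c N / real N) \<longlonglongrightarrow> 0"
    show "normal_set (AQ (primes_of c))"
      unfolding AQ_primes_of_eq
    proof (rule normal_set_if_shift_correlations_vanish)
      fix T :: "nat set" assume "finite T" "T \<noteq> {}"
      then show "(\<lambda>N. (\<Sum>i=1..N. \<Prod>j\<in>T. random_lambda c (i + j)) / real N) \<longlonglongrightarrow> 0"
        using corr by (simp add: lambda_shift_sum_def random_lambda_shift_prod)
    qed (rule random_lambda_cases)
  qed
qed

end
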